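(* Let $a\in\mathbb{R}$, $b\in(a,\infty)$, $h\in\mathbb{N}$, $v_1,\dots,v_h,w_1,\dots,w_h\in(0,\infty)$, let $f,p\in C(\mathbb{R},\mathbb{R})$ satisfy for all $x\in\mathbb{R}$ that $p(x)\ge0$ and $p^{-1}((0,\infty))=(a,b)$, with $\mathcal{L}$, $I_i^\theta$, $\operatorname{Lip}$ as in the context. Assume $\operatorname{Lip}(f)<\min_{i\in\{1,\dots,h\}}v_iw_i$, let $\theta\in\mathbb{R}^{h+1}$ satisfy $(\nabla\mathcal{L})(\theta)=0$, let $\varepsilon,\delta\in(0,\infty)$ satisfy $\varepsilon-\delta>2[\min_{j\in\{1,\dots,h\}}w_j]^{-1}$ and $\inf_{x\in[a+\delta,b-\delta]}p(x)\ge[\min_{j\in\{1,\dots,h\}}w_j]^{-1}\operatorname{Lip}(p)$, assume that $p|_{[a,a+\varepsilon]}$ is strictly increasing and $p|_{[b-\varepsilon,b]}$ is strictly decreasing, and assume that $\theta$ is not a descending critical point of $\mathcal{L}$. Then for all $x\in(a,b)$ it holds that $$\sum_{j\in\{1,\dots,h\},\,x\in I_j^\theta}v_jw_j\le4\max_{j\in\{1,\dots,h\},\,x\in I_j^\theta}v_jw_j.$$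
   Context: Let $\mathfrak{c}(x)=\min\{\max\{x,0\},1\}$. For $F\in C(\mathbb{R},\mathbb{R})$ let $\operatorname{Lip}(F)=\sup_{x,y\in[a,b],x\ne y}\frac{|F(x)-F(y)|}{|x-y|}$. For $\theta=(\theta_1,\dots,\theta_{h+1})\in\mathbb{R}^{h+1}$ and $i\in\{1,\dots,h\}$ let $\psi_i(\theta)=-[w_i]^{-1}\theta_i$, $I_i^\theta=(\psi_i(\theta),\psi_i(\theta)+[w_i]^{-1})\cap(a,b)$, $\mathcal{N}^\theta(x)=\theta_{h+1}+\sum_{i=1}^hv_i\mathfrak{c}(w_ix+\theta_i)$, and $\mathcal{L}(\theta)=\int_a^b(\mathcal{N}^\theta(x)-f(x))^2p(x)\,\mathrm{d}x$; in this setting $\mathcal{L}\in C^2(\mathbb{R}^{h+1},\mathbb{R})$. For $n\in\mathbb{N}$ and $F\in C^2(\mathbb{R}^n,\mathbb{R})$, a point $x\in\mathbb{R}^n$ is a descending critical point of $F$ if $(\nabla F)(x)=0$ and there exists $u\in\mathbb{R}^n$ with $\langle u,((\operatorname{Hess}F)(x))u\rangle<0$. *)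

theory Defs
  imports "HOL-Analysis.Analysis" "HOL-Library.Extended_Real"
begin

definition clip :: "real \<Rightarrow> real" where
  "clip x = min (max x 0) 1"

definition Lip :: "real \<Rightarrow> real \<Rightarrow> (real \<Rightarrow> real) \<Rightarrow> ereal" where
  "Lip a b F = (SUP xy \<in> {(x, y). x \<in> {a..b} \<and> y \<in> {a..b} \<and> x \<noteq> y}.
                  ereal (\<bar>F (fst xy) - F (snd xy)\<bar> / \<bar>fst xy - snd xy\<bar>))"

text \<open>Points of R^(h+1) are represented as functions nat => real, using coordinates 1..h+1.
  Network weights v, w are indexed by 1..h.\<close>

definition psi :: "(nat \<Rightarrow> real) \<Rightarrow> (nat \<Rightarrow> real) \<Rightarrow> nat \<Rightarrow> real" where
  "psi w \<theta> i = - (\<theta> i / w i)"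

definition Iset :: "real \<Rightarrow> real \<Rightarrow> (nat \<Rightarrow> real) \<Rightarrow> (nat \<Rightarrow> real) \<Rightarrow> nat \<Rightarrow> real set" where
  "Iset a b w \<theta> i = {psi w \<theta> i <..< psi w \<theta> i + 1 / w i} \<inter> {a<..<b}"

definition NN :: "nat \<Rightarrow> (nat \<Rightarrow> real) \<Rightarrow> (nat \<Rightarrow> real) \<Rightarrow> (nat \<Rightarrow> real) \<Rightarrow> real \<Rightarrow> real" where
  "NN h v w \<theta> x = \<theta> (h + 1) + (\<Sum>i = 1..h. v i * clip (w i * x + \<theta> i))"

definition risk :: "real \<Rightarrow> real \<Rightarrow> nat \<Rightarrow> (nat \<Rightarrow> real) \<Rightarrow> (nat \<Rightarrow> real)
                    \<Rightarrow> (real \<Rightarrow> real) \<Rightarrow> (real \<Rightarrow> real) \<Rightarrow> (nat \<Rightarrow> real) \<Rightarrow> real" where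
  "risk a b h v w f p \<theta> = integral {a..b} (\<lambda>x. (NN h v w \<theta> x - f x)\<^sup>2 * p x)"

definition partial :: "((nat \<Rightarrow> real) \<Rightarrow> real) \<Rightarrow> nat \<Rightarrow> (nat \<Rightarrow> real) \<Rightarrow> real" where
  "partial F i \<theta> = deriv (\<lambda>t. F (\<theta>(i := t))) (\<theta> i)"

definition hess :: "((nat \<Rightarrow> real) \<Rightarrow> real) \<Rightarrow> (nat \<Rightarrow> real) \<Rightarrow> nat \<Rightarrow> nat \<Rightarrow> real" where
  "hess F \<theta> i j = partial (partial F j) i \<theta>"

definition descending_critical_point :: "nat \<Rightarrow> ((nat \<Rightarrow> real) \<Rightarrow> real) \<Rightarrow> (nat \<Rightarrow> real) \<Rightarrow> bool" where
  "descending_critical_point n F \<theta> \<longleftrightarrow>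
     (\<forall>i \<in> {1..n}. partial F i \<theta> = 0) \<and>
     (\<exists>u :: nat \<Rightarrow> real. (\<Sum>i = 1..n. \<Sum>j = 1..n. u i * hess F \<theta> i j * u j) < 0)"

end

theory Submission
  imports Defs
begin

text \<open>At a critical point, the derivative of the risk in the bias of neuron \<open>k\<close> states that
  the residual \<open>N - f\<close> is orthogonal to \<open>p\<close> on the window \<open>I\<^sub>k\<close> where the neuron is linear;
  as the point is not a descending critical point, the second derivative in that bias is
  nonnegative, which bounds the flux \<open>(N - f) p\<close> across \<open>I\<^sub>k\<close> by \<open>v\<^sub>k w\<^sub>k\<close> times the
  \<open>p\<close>-mass of \<open>I\<^sub>k\<close>. Because \<open>Lip(f) < v\<^sub>j w\<^sub>j\<close>, the residual increases strictly on every
  window, so two windows containing \<open>x\<close> cannot cross and the active windows at \<open>x\<close> are nested.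
  On the innermost one, say of neuron \<open>k\<close>, every active neuron is linear and the residual grows
  with slope at least \<open>\<Sum>\<^sub>j v\<^sub>j w\<^sub>j - Lip(f)\<close>. Orthogonality and the flux bound cap this slope
  by \<open>2 v\<^sub>k w\<^sub>k\<close>, provided \<open>p\<close> is not too concentrated near one end of the window, which follows
  from the monotonicity of \<open>p\<close> near \<open>a\<close> and \<open>b\<close> and its slow variation in between. Hence
  \<open>\<Sum>\<^sub>j v\<^sub>j w\<^sub>j < 3 v\<^sub>k w\<^sub>k\<close>.\<close>

section \<open>Integrals over moving windows\<close>

lemma continuous_on_UNIV_integrable:
  fixes G :: "real \<Rightarrow> real"
  shows "continuous_on UNIV G \<Longrightarrow> G integrable_on {l..r}"
  by (meson continuous_on_subset integrable_continuous_interval subset_UNIV)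

lemma integral_restrict_support:
  fixes G :: "real \<Rightarrow> real"
  assumes G: "continuous_on UNIV G" and zero: "\<And>x. x \<notin> {a<..<b} \<Longrightarrow> G x = 0"
    and lr: "max l a \<le> min r b"
  shows "integral {l..r} G = integral {max l a..min r b} G"
proof -
  have "integral {l..r} G = integral {l..max l a} G + integral {max l a..r} G"
    using lr by (intro Henstock_Kurzweil_Integration.integral_combine[symmetric]
        continuous_on_UNIV_integrable G) auto
  moreover have "integral {max l a..r} G = integral {max l a..min r b} G + integral {min r b..r} G"
    using lr by (intro Henstock_Kurzweil_Integration.integral_combine[symmetric]
        continuous_on_UNIV_integrable G) auto
  moreover have "integral {l..max l a} G = 0"
    using zero by (cases "l \<le> a") (auto simp: max_def intro!: has_integral_is_0[THEN integral_unique])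
  moreover have "integral {min r b..r} G = 0"
    using zero by (cases "b \<le> r") (auto simp: min_def intro!: has_integral_is_0[THEN integral_unique])
  ultimately show ?thesis by simp
qed

lemma integral_upper_limit_has_real_derivative:
  fixes F :: "real \<Rightarrow> real"
  assumes "continuous_on UNIV F" "A < y"
  shows "((\<lambda>y. integral {A..y} F) has_real_derivative F y) (at y)"
proof -
  have "((\<lambda>x. integral {A..x} F) has_real_derivative F y) (at y within {A..y+1})"
    using assms by (intro integral_has_real_derivative continuous_on_subset[OF assms(1)]) auto
  moreover have "at y within {A..y+1} = at y" using assms(2) by (intro at_within_Icc_at) auto
  ultimately show ?thesis by simp
qed

text \<open>\<open>{-s/w..(1-s)/w}\<close> is the window on which \<open>clip (w*x + s)\<close> is linear in \<open>x\<close>.\<close>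

lemma window_integral_has_real_derivative:
  fixes F :: "real \<Rightarrow> real"
  assumes F: "continuous_on UNIV F" and w: "w > 0"
  shows "((\<lambda>s. integral {-s/w..(1-s)/w} F) has_real_derivative
           (F (-s0/w) - F ((1-s0)/w)) / w) (at s0)"
proof -
  define A where "A = -s0/w - 1"
  define P where "P = (\<lambda>y. integral {A..y} F)"
  have below: "A < -s0/w" "A < (1-s0)/w" using w by (auto simp: A_def divide_simps)
  have primitive: "((\<lambda>s. P (g s)) has_real_derivative F (g s0) * (-1/w)) (at s0)"
    if "g = (\<lambda>s. -s/w) \<or> g = (\<lambda>s. (1-s)/w)" for g
  proof (rule DERIV_chain2[where f = P])
    show "(P has_real_derivative F (g s0)) (at (g s0))"
      unfolding P_def using that below by (auto intro: integral_upper_limit_has_real_derivative F)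
    show "(g has_real_derivative (-1/w)) (at s0)"
      using that w by (auto intro!: derivative_eq_intros simp: field_simps)
  qed
  have window: "P ((1-s)/w) - P (-s/w) = integral {-s/w..(1-s)/w} F"
    if "s \<in> {s0-w<..<s0+w}" for s
  proof -
    have "s/w \<le> (s0+w)/w" using that w by (intro divide_right_mono) auto
    then have "A \<le> -s/w" using w by (simp add: A_def add_divide_distrib)
    moreover have "-s/w \<le> (1-s)/w" using w by (simp add: divide_simps)
    ultimately show ?thesis
      using Henstock_Kurzweil_Integration.integral_combine[of A "-s/w" "(1-s)/w" F]
      unfolding P_def by (simp add: continuous_on_UNIV_integrable F)
  qed
  have "((\<lambda>s. P ((1-s)/w) - P (-s/w)) has_real_derivative (F (-s0/w) - F ((1-s0)/w)) / w) (at s0)"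
    using DERIV_diff[OF primitive[of "\<lambda>s. (1-s)/w"] primitive[of "\<lambda>s. -s/w"]]
    by (simp add: diff_divide_distrib)
  then show ?thesis
    by (rule has_field_derivative_transform_within_open[where S = "{s0-w<..<s0+w}"])
      (use w window in auto)
qed

lemma integral_affine_times:
  fixes F :: "real \<Rightarrow> real"
  assumes F: "continuous_on UNIV F"
  shows "integral {l..r} (\<lambda>x. (w*x + s) * F x)
           = w * integral {l..r} (\<lambda>x. x * F x) + s * integral {l..r} F"
proof -
  have "integral {l..r} (\<lambda>x. (w*x + s) * F x)
          = integral {l..r} (\<lambda>x. w * (x * F x) + s * F x)"
    by (simp add: algebra_simps)
  also have "\<dots> = w * integral {l..r} (\<lambda>x. x * F x) + s * integral {l..r} F"
    by (simp add: integral_add continuous_on_UNIV_integrable continuous_on_mult F)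
  finally show ?thesis .
qed

lemma integral_affine_square_times:
  fixes F :: "real \<Rightarrow> real"
  assumes F: "continuous_on UNIV F"
  shows "integral {l..r} (\<lambda>x. (w*x + s)^2 * F x)
           = w^2 * integral {l..r} (\<lambda>x. x^2 * F x) + 2*w * s * integral {l..r} (\<lambda>x. x * F x)
             + s^2 * integral {l..r} F"
proof -
  have xF: "continuous_on UNIV (\<lambda>x. x * F x)" and x2F: "continuous_on UNIV (\<lambda>x. x^2 * F x)"
    by (intro continuous_intros F)+
  have "integral {l..r} (\<lambda>x. (w*x + s)^2 * F x)
          = integral {l..r} (\<lambda>x. w^2 * (x^2 * F x) + 2*w * s * (x * F x) + s^2 * F x)"
    by (simp add: algebra_simps power2_eq_square)
  also have "\<dots> = w^2 * integral {l..r} (\<lambda>x. x^2 * F x) + 2*w * s * integral {l..r} (\<lambda>x. x * F x)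
             + s^2 * integral {l..r} F"
    by (simp add: integral_add continuous_on_UNIV_integrable continuous_on_add continuous_on_mult_left
        F xF x2F)
  finally show ?thesis .
qed

lemma window_integral_affine_has_real_derivative:
  fixes F :: "real \<Rightarrow> real"
  assumes F: "continuous_on UNIV F" and w: "w > 0"
  shows "((\<lambda>s. integral {-s/w..(1-s)/w} (\<lambda>x. (w*x + s) * F x)) has_real_derivative
           integral {-s0/w..(1-s0)/w} F - F ((1-s0)/w) / w) (at s0)"
proof -
  have xF: "continuous_on UNIV (\<lambda>x. x * F x)" by (intro continuous_intros F)
  note D = DERIV_add[OF DERIV_cmult[OF window_integral_has_real_derivative[OF xF w], of w]
      DERIV_mult[OF DERIV_ident window_integral_has_real_derivative[OF F w]]]
  show ?thesis
    unfolding integral_affine_times[OF F]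
    by (rule DERIV_cong[OF D]) (use w in \<open>simp add: field_simps\<close>)
qed

lemma window_integral_affine_square_has_real_derivative:
  fixes F :: "real \<Rightarrow> real"
  assumes F: "continuous_on UNIV F" and w: "w > 0"
  shows "((\<lambda>s. integral {-s/w..(1-s)/w} (\<lambda>x. (w*x + s)^2 * F x)) has_real_derivative
           2 * integral {-s0/w..(1-s0)/w} (\<lambda>x. (w*x + s0) * F x) - F ((1-s0)/w) / w) (at s0)"
proof -
  have xF: "continuous_on UNIV (\<lambda>x. x * F x)" and x2F: "continuous_on UNIV (\<lambda>x. x^2 * F x)"
    by (intro continuous_intros F)+
  have lin: "((\<lambda>s. 2*w * s) has_real_derivative 2*w) (at s0)"
    using DERIV_cmult[OF DERIV_ident, of "2*w"] by simp
  have sq: "((\<lambda>s. s^2) has_real_derivative 2 * s0) (at s0)"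
    by (auto intro!: derivative_eq_intros)
  note D = DERIV_add[OF DERIV_add[OF
      DERIV_cmult[OF window_integral_has_real_derivative[OF x2F w], of "w^2"]
      DERIV_mult[OF lin window_integral_has_real_derivative[OF xF w]]]
      DERIV_mult[OF sq window_integral_has_real_derivative[OF F w]]]
  have alg: "w^2 * ((l^2 * Fl - r^2 * Fr) / w) + (2*w * I1 + (l * Fl - r * Fr) / w * (2*w * s0))
          + (2 * s0 * I0 + (Fl - Fr) / w * s0^2) = 2 * (w * I1 + s0 * I0) - Fr / w"
    if "l = -s0/w" "r = (1-s0)/w" for l r Fl Fr I0 I1
    using w by (simp add: that field_simps power2_eq_square)
  show ?thesis
    unfolding integral_affine_square_times[OF F] integral_affine_times[OF F]
    by (rule DERIV_cong[OF D], rule alg) (rule refl)+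
qed

lemma continuous_on_clip [continuous_intros]:
  "continuous_on S g \<Longrightarrow> continuous_on S (\<lambda>x. clip (g x))"
  unfolding clip_def by (intro continuous_intros)

lemma clip_eq_0: "y \<le> 0 \<Longrightarrow> clip y = 0"
  by (simp add: clip_def)

lemma clip_eq_1: "1 \<le> y \<Longrightarrow> clip y = 1"
  by (simp add: clip_def)

lemma clip_eq_self: "0 \<le> y \<Longrightarrow> y \<le> 1 \<Longrightarrow> clip y = y"
  by (simp add: clip_def)

lemma clip_mono: "y \<le> z \<Longrightarrow> clip y \<le> clip z"
  by (simp add: clip_def)

lemma integral_clip_split:
  fixes F K :: "real \<Rightarrow> real"
  assumes F: "continuous_on UNIV F" and K: "continuous_on UNIV K" and w: "w > 0"
    and A: "A \<le> -s/w" and B: "(1-s)/w \<le> B"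
  shows "integral {A..B} (\<lambda>x. K (clip (w*x + s)) * F x)
           = K 0 * integral {A..-s/w} F + integral {-s/w..(1-s)/w} (\<lambda>x. K (w*x + s) * F x)
             + K 1 * integral {(1-s)/w..B} F"
proof -
  define G where "G = (\<lambda>x. K (clip (w*x + s)) * F x)"
  have G: "continuous_on UNIV G"
    unfolding G_def by (intro continuous_intros F continuous_on_compose2[OF K _ subset_UNIV])
  have lr: "-s/w \<le> (1-s)/w" using w by (simp add: divide_simps)
  have "integral {A..B} G = integral {A..-s/w} G + integral {-s/w..(1-s)/w} G + integral {(1-s)/w..B} G"
    using A lr B G by (simp add: Henstock_Kurzweil_Integration.integral_combine
        continuous_on_UNIV_integrable)
  moreover have "integral {A..-s/w} G = integral {A..-s/w} (\<lambda>x. K 0 * F x)"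
  proof (rule integral_cong)
    fix x assume "x \<in> {A..-s/w}"
    then have "w*x + s \<le> 0" using w by (auto simp: field_simps)
    then show "G x = K 0 * F x" by (simp add: G_def clip_eq_0)
  qed
  moreover have "integral {-s/w..(1-s)/w} G = integral {-s/w..(1-s)/w} (\<lambda>x. K (w*x + s) * F x)"
  proof (rule integral_cong)
    fix x assume "x \<in> {-s/w..(1-s)/w}"
    then have "0 \<le> w*x + s" "w*x + s \<le> 1" using w by (auto simp: field_simps)
    then show "G x = K (w*x + s) * F x" by (simp add: G_def clip_eq_self)
  qed
  moreover have "integral {(1-s)/w..B} G = integral {(1-s)/w..B} (\<lambda>x. K 1 * F x)"
  proof (rule integral_cong)
    fix x assume "x \<in> {(1-s)/w..B}"
    then have "1 \<le> w*x + s" using w by (auto simp: field_simps)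
    then show "G x = K 1 * F x" by (simp add: G_def clip_eq_1)
  qed
  ultimately show ?thesis unfolding G_def by simp
qed

text \<open>Since \<open>K 0 = 0\<close>, only the part of \<open>{a..b}\<close> to the right of the window contributes
  besides the window itself, and it shrinks as the window moves right.\<close>

lemma integral_clip_has_real_derivative:
  fixes F K :: "real \<Rightarrow> real"
  assumes F: "continuous_on UNIV F" and K: "continuous_on UNIV K" and w: "w > 0"
    and zero: "\<And>x. x \<notin> {a<..<b} \<Longrightarrow> F x = 0" and "a \<le> b" and K0: "K 0 = 0"
    and window: "((\<lambda>s. integral {-s/w..(1-s)/w} (\<lambda>x. K (w*x + s) * F x)) has_real_derivative M) (at s0)"
  shows "((\<lambda>s. integral {a..b} (\<lambda>x. K (clip (w*x + s)) * F x)) has_real_derivative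
           M + K 1 * F ((1-s0)/w) / w) (at s0)"
proof -
  define A where "A = min a (-s0/w - 1)"
  define B where "B = max b ((1-s0)/w + 1)"
  have split: "integral {a..b} (\<lambda>x. K (clip (w*x + s)) * F x)
      = integral {-s/w..(1-s)/w} (\<lambda>x. K (w*x + s) * F x)
        + K 1 * (integral {A..B} F - integral {A..(1-s)/w} F)"
    if "s \<in> {s0-w<..<s0+w}" for s
  proof -
    have "s/w \<le> (s0+w)/w" "(1-s)/w \<le> (1-s0+w)/w" using that w by (auto intro: divide_right_mono)
    then have bounds: "A \<le> -s/w" "(1-s)/w \<le> B"
      using w by (auto simp: A_def B_def add_divide_distrib diff_divide_distrib)
    have lr: "-s/w \<le> (1-s)/w" using w by (simp add: divide_simps)
    have cont: "continuous_on UNIV (\<lambda>x. K (clip (w*x + s)) * F x)"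
      by (intro continuous_intros F continuous_on_compose2[OF K _ subset_UNIV])
    have "integral {A..B} (\<lambda>x. K (clip (w*x + s)) * F x)
        = integral {max A a..min B b} (\<lambda>x. K (clip (w*x + s)) * F x)"
      by (rule integral_restrict_support[OF cont]) (use zero \<open>a \<le> b\<close> in \<open>auto simp: A_def B_def\<close>)
    then have "integral {a..b} (\<lambda>x. K (clip (w*x + s)) * F x)
        = integral {A..B} (\<lambda>x. K (clip (w*x + s)) * F x)"
      by (simp add: A_def B_def)
    also have "\<dots> = integral {-s/w..(1-s)/w} (\<lambda>x. K (w*x + s) * F x)
        + K 1 * integral {(1-s)/w..B} F"
      using integral_clip_split[OF F K w bounds] by (simp add: K0)
    also have "integral {(1-s)/w..B} F = integral {A..B} F - integral {A..(1-s)/w} F"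
      using Henstock_Kurzweil_Integration.integral_combine[of A "(1-s)/w" B F] bounds lr
      by (simp add: continuous_on_UNIV_integrable F)
    finally show ?thesis .
  qed
  have "((\<lambda>s. integral {A..(1-s)/w} F) has_real_derivative F ((1-s0)/w) * (-1/w)) (at s0)"
  proof (rule DERIV_chain2[where f = "\<lambda>y. integral {A..y} F"])
    have "-s0/w - 1 < (1-s0)/w" using w by (simp add: divide_simps)
    then have "A < (1-s0)/w" by (simp add: A_def)
    then show "((\<lambda>y. integral {A..y} F) has_real_derivative F ((1-s0)/w)) (at ((1-s0)/w))"
      by (intro integral_upper_limit_has_real_derivative F)
    show "((\<lambda>s. (1-s)/w) has_real_derivative (-1/w)) (at s0)"
      using w by (auto intro!: derivative_eq_intros simp: field_simps)
  qed
  from DERIV_add[OF window DERIV_cmult[OF DERIV_diff[OF DERIV_const this], of "K 1"]]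
  have "((\<lambda>s. integral {-s/w..(1-s)/w} (\<lambda>x. K (w*x + s) * F x)
      + K 1 * (integral {A..B} F - integral {A..(1-s)/w} F))
      has_real_derivative M + K 1 * F ((1-s0)/w) / w) (at s0)"
    by simp
  then show ?thesis
    by (rule has_field_derivative_transform_within_open[where S = "{s0-w<..<s0+w}"])
      (use w split in auto)
qed

lemma integral_clip_times_has_real_derivative:
  fixes F :: "real \<Rightarrow> real"
  assumes F: "continuous_on UNIV F" and w: "w > 0"
    and zero: "\<And>x. x \<notin> {a<..<b} \<Longrightarrow> F x = 0" and "a \<le> b"
  shows "((\<lambda>s. integral {a..b} (\<lambda>x. clip (w*x + s) * F x)) has_real_derivative
           integral {-s0/w..(1-s0)/w} F) (at s0)"
  using integral_clip_has_real_derivative[where K = "\<lambda>y. y", OF F _ w zero \<open>a \<le> b\<close> _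
      window_integral_affine_has_real_derivative[OF F w]]
  by simp

lemma integral_clip_square_times_has_real_derivative:
  fixes F :: "real \<Rightarrow> real"
  assumes F: "continuous_on UNIV F" and w: "w > 0"
    and zero: "\<And>x. x \<notin> {a<..<b} \<Longrightarrow> F x = 0" and "a \<le> b"
  shows "((\<lambda>s. integral {a..b} (\<lambda>x. (clip (w*x + s))^2 * F x)) has_real_derivative
           2 * integral {-s0/w..(1-s0)/w} (\<lambda>x. (w*x + s0) * F x)) (at s0)"
  using integral_clip_has_real_derivative[where K = "\<lambda>y. y^2", OF F
      continuous_on_power[OF continuous_on_id] w zero \<open>a \<le> b\<close> _
      window_integral_affine_square_has_real_derivative[OF F w]]
  by simp

section \<open>Derivatives of the risk in a bias coordinate\<close>

lemma partial_hess_diag_eqI: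
  assumes d1: "\<And>s. ((\<lambda>t. F (\<theta>(i := t))) has_real_derivative g1 s) (at s)"
    and d2: "\<And>s. (g1 has_real_derivative g2 s) (at s)"
  shows "partial F i \<theta> = g1 (\<theta> i)" "hess F \<theta> i i = g2 (\<theta> i)"
proof -
  have upd: "partial F i (\<theta>(i := t)) = g1 t" for t
    unfolding partial_def by (simp add: DERIV_imp_deriv[OF d1])
  show "partial F i \<theta> = g1 (\<theta> i)"
    using upd[of "\<theta> i"] by simp
  show "hess F \<theta> i i = g2 (\<theta> i)"
    unfolding hess_def partial_def[of "partial F i"] using DERIV_imp_deriv[OF d2] by (simp add: upd)
qed

lemma descending_critical_point_if_hess_diag_neg:
  assumes "\<forall>i \<in> {1..n}. partial F i \<theta> = 0" and k: "k \<in> {1..n}" and neg: "hess F \<theta> k k < 0"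
  shows "descending_critical_point n F \<theta>"
proof -
  define u :: "nat \<Rightarrow> real" where "u = (\<lambda>j. if j = k then 1 else 0)"
  have "u i * hess F \<theta> i j * u j = (if j = k then (if i = k then hess F \<theta> k k else 0) else 0)" for i j
    by (simp add: u_def)
  then have "(\<Sum>i = 1..n. \<Sum>j = 1..n. u i * hess F \<theta> i j * u j) < 0"
    using k neg by simp
  then show ?thesis
    using assms(1) unfolding descending_critical_point_def by blast
qed

lemma NN_fun_upd:
  assumes "i \<in> {1..h}"
  shows "NN h v w (\<theta>(i := s)) x
           = \<theta> (h+1) + (\<Sum>j \<in> {1..h} - {i}. v j * clip (w j * x + \<theta> j)) + v i * clip (w i * x + s)"
proof -
  have "(\<Sum>j = 1..h. v j * clip (w j * x + (\<theta>(i := s)) j))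
          = v i * clip (w i * x + s) + (\<Sum>j \<in> {1..h} - {i}. v j * clip (w j * x + (\<theta>(i := s)) j))"
    using assms by (simp add: sum.remove)
  also have "(\<Sum>j \<in> {1..h} - {i}. v j * clip (w j * x + (\<theta>(i := s)) j))
               = (\<Sum>j \<in> {1..h} - {i}. v j * clip (w j * x + \<theta> j))"
    by (intro sum.cong) auto
  finally show ?thesis
    using assms unfolding NN_def by simp
qed

lemma risk_fun_upd:
  fixes f p :: "real \<Rightarrow> real" and v w \<theta> :: "nat \<Rightarrow> real"
  assumes i: "i \<in> {1..h}" and f: "continuous_on UNIV f" and p: "continuous_on UNIV p"
  defines "R \<equiv> \<lambda>x. \<theta> (h+1) + (\<Sum>j \<in> {1..h} - {i}. v j * clip (w j * x + \<theta> j)) - f x"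
  shows "risk a b h v w f p (\<theta>(i := s))
           = integral {a..b} (\<lambda>x. (R x)^2 * p x)
             + 2 * v i * integral {a..b} (\<lambda>x. clip (w i * x + s) * (R x * p x))
             + (v i)^2 * integral {a..b} (\<lambda>x. (clip (w i * x + s))^2 * p x)"
proof -
  have R: "continuous_on UNIV R" unfolding R_def by (intro continuous_intros f)
  have "(\<lambda>x. (NN h v w (\<theta>(i := s)) x - f x)^2 * p x)
      = (\<lambda>x. ((R x)^2 * p x + 2 * v i * (clip (w i * x + s) * (R x * p x)))
          + (v i)^2 * ((clip (w i * x + s))^2 * p x))"
    by (rule ext) (simp add: NN_fun_upd[OF i] R_def power2_eq_square algebra_simps)
  moreover have "integral {a..b} (\<lambda>x. ((R x)^2 * p x + 2 * v i * (clip (w i * x + s) * (R x * p x)))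
          + (v i)^2 * ((clip (w i * x + s))^2 * p x))
      = integral {a..b} (\<lambda>x. (R x)^2 * p x + 2 * v i * (clip (w i * x + s) * (R x * p x)))
        + (v i)^2 * integral {a..b} (\<lambda>x. (clip (w i * x + s))^2 * p x)"
    by (subst integral_add) (simp_all add: continuous_on_UNIV_integrable continuous_on_clip continuous_on_add continuous_on_diff continuous_on_mult continuous_on_mult_left continuous_on_power R p)
  moreover have "integral {a..b} (\<lambda>x. (R x)^2 * p x + 2 * v i * (clip (w i * x + s) * (R x * p x)))
      = integral {a..b} (\<lambda>x. (R x)^2 * p x)
        + 2 * v i * integral {a..b} (\<lambda>x. clip (w i * x + s) * (R x * p x))"
    by (subst integral_add) (simp_all add: continuous_on_UNIV_integrable continuous_on_clip continuous_on_add continuous_on_diff continuous_on_mult continuous_on_mult_left continuous_on_power R p)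
  ultimately show ?thesis
    unfolding risk_def by simp
qed

lemma risk_bias_derivatives_via_reduced_residual:
  fixes f p :: "real \<Rightarrow> real" and v w \<theta> :: "nat \<Rightarrow> real"
  assumes k: "k \<in> {1..h}" and w: "w k > 0" and f: "continuous_on UNIV f" and p: "continuous_on UNIV p"
    and zero: "\<And>x. x \<notin> {a<..<b} \<Longrightarrow> p x = 0" and "a \<le> b"
  defines "R \<equiv> \<lambda>x. \<theta> (h+1) + (\<Sum>j \<in> {1..h} - {k}. v j * clip (w j * x + \<theta> j)) - f x"
  shows "partial (risk a b h v w f p) k \<theta>
           = 2 * v k * integral {-\<theta> k/w k..(1-\<theta> k)/w k} (\<lambda>x. R x * p x)
             + (v k)^2 * (2 * integral {-\<theta> k/w k..(1-\<theta> k)/w k} (\<lambda>x. (w k * x + \<theta> k) * p x))"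
    and "hess (risk a b h v w f p) \<theta> k k
           = 2 * v k * ((R (-\<theta> k/w k) * p (-\<theta> k/w k) - R ((1-\<theta> k)/w k) * p ((1-\<theta> k)/w k)) / w k)
             + (v k)^2 * (2 * (integral {-\<theta> k/w k..(1-\<theta> k)/w k} p - p ((1-\<theta> k)/w k) / w k))"
proof -
  have R: "continuous_on UNIV R" unfolding R_def by (intro continuous_intros f)
  have Rp: "continuous_on UNIV (\<lambda>x. R x * p x)" by (intro continuous_intros R p)
  define g1 where "g1 = (\<lambda>s. 2 * v k * integral {-s/w k..(1-s)/w k} (\<lambda>x. R x * p x)
    + (v k)^2 * (2 * integral {-s/w k..(1-s)/w k} (\<lambda>x. (w k * x + s) * p x)))"
  define g2 where "g2 = (\<lambda>s. 2 * v k * ((R (-s/w k) * p (-s/w k) - R ((1-s)/w k) * p ((1-s)/w k)) / w k)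
    + (v k)^2 * (2 * (integral {-s/w k..(1-s)/w k} p - p ((1-s)/w k) / w k)))"
  have "((\<lambda>t. risk a b h v w f p (\<theta>(k := t))) has_real_derivative g1 s) (at s)" for s
  proof -
    have risk: "(\<lambda>t. risk a b h v w f p (\<theta>(k := t))) = (\<lambda>t. integral {a..b} (\<lambda>x. (R x)^2 * p x)
        + 2 * v k * integral {a..b} (\<lambda>x. clip (w k * x + t) * (R x * p x))
        + (v k)^2 * integral {a..b} (\<lambda>x. (clip (w k * x + t))^2 * p x))"
      unfolding R_def by (rule ext) (rule risk_fun_upd[OF k f p])
    have lin: "((\<lambda>t. integral {a..b} (\<lambda>x. clip (w k * x + t) * (R x * p x))) has_real_derivative
        integral {-s/w k..(1-s)/w k} (\<lambda>x. R x * p x)) (at s)"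
      by (rule integral_clip_times_has_real_derivative[OF Rp w _ \<open>a \<le> b\<close>]) (simp add: zero)
    have sq: "((\<lambda>t. integral {a..b} (\<lambda>x. (clip (w k * x + t))^2 * p x)) has_real_derivative
        2 * integral {-s/w k..(1-s)/w k} (\<lambda>x. (w k * x + s) * p x)) (at s)"
      by (rule integral_clip_square_times_has_real_derivative[OF p w zero \<open>a \<le> b\<close>])
    show ?thesis
      using DERIV_add[OF DERIV_add[OF DERIV_const DERIV_cmult[OF lin]] DERIV_cmult[OF sq]]
      unfolding risk g1_def by simp
  qed
  moreover have "(g1 has_real_derivative g2 s) (at s)" for s
    unfolding g1_def g2_def
    by (intro DERIV_add DERIV_cmult window_integral_has_real_derivative[OF Rp w]
        window_integral_affine_has_real_derivative[OF p w])
  ultimately show "partial (risk a b h v w f p) k \<theta> = g1 (\<theta> k)" "hess (risk a b h v w f p) \<theta> k k = g2 (\<theta> k)"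
    by (rule partial_hess_diag_eqI)+
qed

lemma risk_bias_derivatives:
  fixes f p :: "real \<Rightarrow> real" and v w \<theta> :: "nat \<Rightarrow> real"
  assumes k: "k \<in> {1..h}" and w: "w k > 0" and f: "continuous_on UNIV f" and p: "continuous_on UNIV p"
    and zero: "\<And>x. x \<notin> {a<..<b} \<Longrightarrow> p x = 0" and "a \<le> b"
  defines "l \<equiv> psi w \<theta> k" and "r \<equiv> psi w \<theta> k + 1 / w k"
  shows "partial (risk a b h v w f p) k \<theta>
           = 2 * v k * integral {l..r} (\<lambda>x. (NN h v w \<theta> x - f x) * p x)"
    and "hess (risk a b h v w f p) \<theta> k k
           = 2 * v k / w k * ((NN h v w \<theta> l - f l) * p l - (NN h v w \<theta> r - f r) * p r)
             + 2 * (v k)^2 * integral {l..r} p"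
proof -
  define R where "R = (\<lambda>x. \<theta> (h+1) + (\<Sum>j \<in> {1..h} - {k}. v j * clip (w j * x + \<theta> j)) - f x)"
  have R: "continuous_on UNIV R" unfolding R_def by (intro continuous_intros f)
  have lr: "-\<theta> k / w k = l" "(1 - \<theta> k) / w k = r"
    using w by (simp_all add: l_def r_def psi_def field_simps)
  have partial_eq: "partial (risk a b h v w f p) k \<theta>
      = 2 * v k * integral {l..r} (\<lambda>x. R x * p x)
        + (v k)^2 * (2 * integral {l..r} (\<lambda>x. (w k * x + \<theta> k) * p x))"
    and hess_eq: "hess (risk a b h v w f p) \<theta> k k
      = 2 * v k * ((R l * p l - R r * p r) / w k) + (v k)^2 * (2 * (integral {l..r} p - p r / w k))"
    using risk_bias_derivatives_via_reduced_residual[where k = k and w = w and v = v and \<theta> = \<theta>,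
        OF k w f p zero \<open>a \<le> b\<close>]
    unfolding lr R_def by simp_all
  have residual: "NN h v w \<theta> x - f x = R x + v k * clip (w k * x + \<theta> k)" for x
    using NN_fun_upd[OF k, of v w \<theta> "\<theta> k" x] by (simp add: R_def)
  have wl: "w k * l + \<theta> k = 0" and wr: "w k * r + \<theta> k = 1"
    using w by (simp_all add: l_def r_def psi_def field_simps)
  have "integral {l..r} (\<lambda>x. (NN h v w \<theta> x - f x) * p x)
      = integral {l..r} (\<lambda>x. R x * p x + v k * ((w k * x + \<theta> k) * p x))"
  proof (rule integral_cong)
    fix x assume "x \<in> {l..r}"
    then have "w k * l \<le> w k * x" "w k * x \<le> w k * r" using w by auto
    then have "clip (w k * x + \<theta> k) = w k * x + \<theta> k" using wl wr by (intro clip_eq_self) auto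
    then show "(NN h v w \<theta> x - f x) * p x = R x * p x + v k * ((w k * x + \<theta> k) * p x)"
      by (simp add: residual algebra_simps)
  qed
  also have "\<dots> = integral {l..r} (\<lambda>x. R x * p x) + v k * integral {l..r} (\<lambda>x. (w k * x + \<theta> k) * p x)"
    by (subst integral_add) (simp_all add: continuous_on_UNIV_integrable continuous_on_clip continuous_on_add continuous_on_diff continuous_on_mult continuous_on_mult_left continuous_on_power R p)
  finally show "partial (risk a b h v w f p) k \<theta>
      = 2 * v k * integral {l..r} (\<lambda>x. (NN h v w \<theta> x - f x) * p x)"
    by (simp only: partial_eq) (simp add: algebra_simps power2_eq_square)
  have "NN h v w \<theta> l - f l = R l" "NN h v w \<theta> r - f r = R r + v k"
    using residual[of l] residual[of r] wl wr by (simp_all add: clip_eq_0 clip_eq_1)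
  then show "hess (risk a b h v w f p) \<theta> k k
      = 2 * v k / w k * ((NN h v w \<theta> l - f l) * p l - (NN h v w \<theta> r - f r) * p r)
        + 2 * (v k)^2 * integral {l..r} p"
    using w by (simp add: hess_eq field_simps power2_eq_square)
qed

section \<open>A weighted inequality on a single interval\<close>

definition endpoint_moments :: "real \<Rightarrow> real \<Rightarrow> (real \<Rightarrow> real) \<Rightarrow> real" where
  "endpoint_moments c d q =
     q d * integral {c..d} (\<lambda>t. (d - t) * q t) + q c * integral {c..d} (\<lambda>t. (t - c) * q t)"

text \<open>Compare \<open>g\<close> with the lines of slope \<open>\<sigma>\<close> through its endpoint values and integrate
  against \<open>q\<close>.\<close>

lemma orthogonal_slope_moment_bounds:
  fixes g q :: "real \<Rightarrow> real" and c d \<sigma> :: real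
  assumes g: "continuous_on {c..d} g" and q: "continuous_on {c..d} q"
    and q_nonneg: "\<And>t. t \<in> {c..d} \<Longrightarrow> 0 \<le> q t"
    and orth: "integral {c..d} (\<lambda>t. g t * q t) = 0"
    and slope: "\<And>x y. c \<le> x \<Longrightarrow> x \<le> y \<Longrightarrow> y \<le> d \<Longrightarrow> \<sigma> * (y - x) \<le> g y - g x"
  shows "\<sigma> * integral {c..d} (\<lambda>t. (d - t) * q t) \<le> g d * integral {c..d} q"
    and "\<sigma> * integral {c..d} (\<lambda>t. (t - c) * q t) \<le> - g c * integral {c..d} q"
proof -
  have gq: "(\<lambda>t. g t * q t) integrable_on {c..d}"
    by (intro integrable_continuous_interval continuous_intros q g)
  have "0 \<le> integral {c..d} (\<lambda>t. g d * q t - \<sigma> * ((d - t) * q t))"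
    unfolding orth[symmetric]
  proof (rule integral_le[OF gq])
    fix t assume t: "t \<in> {c..d}"
    have "g t \<le> g d - \<sigma> * (d - t)" using slope[of t d] t by auto
    then have "g t * q t \<le> (g d - \<sigma> * (d - t)) * q t" by (rule mult_right_mono[OF _ q_nonneg[OF t]])
    then show "g t * q t \<le> g d * q t - \<sigma> * ((d - t) * q t)" by (simp add: algebra_simps)
  qed (intro integrable_continuous_interval continuous_intros q)
  then show "\<sigma> * integral {c..d} (\<lambda>t. (d - t) * q t) \<le> g d * integral {c..d} q"
    by (simp add: integral_diff integrable_continuous_interval continuous_on_diff continuous_on_mult
        continuous_on_mult_left q)
  have "integral {c..d} (\<lambda>t. g c * q t + \<sigma> * ((t - c) * q t)) \<le> 0"
    unfolding orth[symmetric]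
  proof (rule integral_le[OF _ gq])
    fix t assume t: "t \<in> {c..d}"
    have "g c + \<sigma> * (t - c) \<le> g t" using slope[of c t] t by auto
    then have "(g c + \<sigma> * (t - c)) * q t \<le> g t * q t" by (rule mult_right_mono[OF _ q_nonneg[OF t]])
    then show "g c * q t + \<sigma> * ((t - c) * q t) \<le> g t * q t" by (simp add: algebra_simps)
  qed (intro integrable_continuous_interval continuous_intros q)
  then show "\<sigma> * integral {c..d} (\<lambda>t. (t - c) * q t) \<le> - g c * integral {c..d} q"
    by (simp add: integral_add integrable_continuous_interval continuous_on_diff continuous_on_mult
        continuous_on_mult_left q)
qed

text \<open>Weighting the bounds above with \<open>q d\<close> and \<open>q c\<close> and using the flux bound gives
  \<open>\<sigma> endpoint_moments c d q \<le> \<kappa> (\<integral> q)\<^sup>2\<close>.\<close>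

lemma slope_le_twice_flux_bound:
  fixes g q :: "real \<Rightarrow> real" and c d \<kappa> \<sigma> :: real
  assumes "c \<le> d" and g: "continuous_on {c..d} g" and q: "continuous_on {c..d} q"
    and q_nonneg: "\<And>t. t \<in> {c..d} \<Longrightarrow> 0 \<le> q t"
    and orth: "integral {c..d} (\<lambda>t. g t * q t) = 0"
    and flux: "g d * q d - g c * q c \<le> \<kappa> * integral {c..d} q"
    and slope: "\<And>x y. c \<le> x \<Longrightarrow> x \<le> y \<Longrightarrow> y \<le> d \<Longrightarrow> \<sigma> * (y - x) \<le> g y - g x"
    and "0 \<le> \<sigma>" and Q_pos: "0 < integral {c..d} q"
    and moments: "(integral {c..d} q)^2 / 2 \<le> endpoint_moments c d q"
  shows "\<sigma> \<le> 2 * \<kappa>"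
proof -
  define Q where "Q = integral {c..d} q"
  define Ar where "Ar = integral {c..d} (\<lambda>t. (d - t) * q t)"
  define Al where "Al = integral {c..d} (\<lambda>t. (t - c) * q t)"
  note bounds = orthogonal_slope_moment_bounds[OF g q q_nonneg orth slope, folded Q_def Ar_def Al_def]
  have "q c \<ge> 0" "q d \<ge> 0" using q_nonneg \<open>c \<le> d\<close> by auto
  then have "\<sigma> * (q d * Ar + q c * Al) \<le> (g d * q d - g c * q c) * Q"
    using mult_left_mono[OF bounds(1) \<open>q d \<ge> 0\<close>] mult_left_mono[OF bounds(2) \<open>q c \<ge> 0\<close>]
    by (simp add: algebra_simps)
  also have "\<dots> \<le> \<kappa> * Q * Q"
    using flux Q_pos unfolding Q_def by (intro mult_right_mono) auto
  finally have "\<sigma> * (Q * Q) \<le> (2 * \<kappa>) * (Q * Q)"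
    using mult_left_mono[OF moments \<open>0 \<le> \<sigma>\<close>]
    unfolding endpoint_moments_def Q_def Ar_def Al_def by (simp add: power2_eq_square)
  then show ?thesis
    using Q_pos unfolding Q_def by simp
qed

text \<open>The bathtub principle: for \<open>0 \<le> q \<le> M\<close> the weight \<open>\<integral> e q\<close> is smallest when
  \<open>q = M\<close> on a sublevel set of \<open>e\<close>.\<close>

lemma bathtub_lower_bound:
  fixes q e :: "real \<Rightarrow> real"
  assumes q: "continuous_on {c..d} q" and e: "continuous_on {c..d} e"
    and q_bounds: "\<And>t. t \<in> {c..d} \<Longrightarrow> 0 \<le> q t \<and> q t \<le> M"
  shows "\<mu> * integral {c..d} q - M * integral {c..d} (\<lambda>t. max 0 (\<mu> - e t))
           \<le> integral {c..d} (\<lambda>t. e t * q t)"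
proof -
  have "integral {c..d} (\<lambda>t. \<mu> * q t - M * max 0 (\<mu> - e t)) \<le> integral {c..d} (\<lambda>t. e t * q t)"
  proof (rule integral_le)
    fix t assume t: "t \<in> {c..d}"
    show "\<mu> * q t - M * max 0 (\<mu> - e t) \<le> e t * q t"
    proof (cases "\<mu> \<le> e t")
      case True
      then show ?thesis using q_bounds[OF t] by (simp add: mult_right_mono)
    next
      case False
      then have "0 \<le> (\<mu> - e t) * (M - q t)" using q_bounds[OF t] by simp
      then show ?thesis using False by (simp add: algebra_simps)
    qed
  qed (intro integrable_continuous_interval continuous_intros q e)+
  then show ?thesis
    by (simp add: integral_diff integrable_continuous_interval continuous_on_max continuous_on_add continuous_on_diff continuous_on_mult continuous_on_mult_left continuous_on_power q e)
qed

lemma integral_distance_to_endpoint: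
  fixes u z :: real
  assumes "u \<le> z"
  shows "integral {u..z} (\<lambda>t. t - u) = (z - u)^2 / 2" "integral {u..z} (\<lambda>t. z - t) = (z - u)^2 / 2"
proof -
  have "(\<lambda>t. t) integrable_on {u..z}" "(\<lambda>t. u) integrable_on {u..z}" "(\<lambda>t. z) integrable_on {u..z}"
    by (auto intro: ident_integrable_on)
  then show "integral {u..z} (\<lambda>t. t - u) = (z - u)^2 / 2" "integral {u..z} (\<lambda>t. z - t) = (z - u)^2 / 2"
    using assms by (simp_all add: integral_diff power2_eq_square field_simps)
qed

lemma integral_ramp_right:
  fixes c d \<mu> :: real
  assumes "0 \<le> \<mu>" "\<mu> \<le> d - c"
  shows "integral {c..d} (\<lambda>t. max 0 (\<mu> - (d - t))) = \<mu>^2 / 2"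
proof -
  define F where "F = (\<lambda>t. max 0 (\<mu> - (d - t)))"
  have "integral {c..d-\<mu>} F + integral {d-\<mu>..d} F = integral {c..d} F"
    using assms unfolding F_def
    by (intro Henstock_Kurzweil_Integration.integral_combine integrable_continuous_interval
        continuous_intros) auto
  moreover have "integral {c..d-\<mu>} F = integral {c..d-\<mu>} (\<lambda>_. 0)"
    by (rule integral_cong) (auto simp: F_def)
  moreover have "integral {d-\<mu>..d} F = integral {d-\<mu>..d} (\<lambda>t. t - (d - \<mu>))"
    by (rule integral_cong) (auto simp: F_def)
  moreover have "\<dots> = \<mu>^2 / 2"
    using assms integral_distance_to_endpoint(1)[of "d - \<mu>" d] by simp
  ultimately show ?thesis by (simp add: F_def)
qed

lemma integral_ramp_left:
  fixes c d \<mu> :: real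
  assumes "0 \<le> \<mu>" "\<mu> \<le> d - c"
  shows "integral {c..d} (\<lambda>t. max 0 (\<mu> - (t - c))) = \<mu>^2 / 2"
proof -
  define F where "F = (\<lambda>t. max 0 (\<mu> - (t - c)))"
  have "integral {c..c+\<mu>} F + integral {c+\<mu>..d} F = integral {c..d} F"
    using assms unfolding F_def
    by (intro Henstock_Kurzweil_Integration.integral_combine integrable_continuous_interval
        continuous_intros) auto
  moreover have "integral {c+\<mu>..d} F = integral {c+\<mu>..d} (\<lambda>_. 0)"
    by (rule integral_cong) (auto simp: F_def)
  moreover have "integral {c..c+\<mu>} F = integral {c..c+\<mu>} (\<lambda>t. (c + \<mu>) - t)"
    by (rule integral_cong) (auto simp: F_def)
  moreover have "\<dots> = \<mu>^2 / 2"
    using assms integral_distance_to_endpoint(2)[of c "c + \<mu>"] by simp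
  ultimately show ?thesis by (simp add: F_def)
qed

lemma integral_bounds:
  fixes q :: "real \<Rightarrow> real"
  assumes "c \<le> d" and q: "continuous_on {c..d} q"
    and q_bounds: "\<And>t. t \<in> {c..d} \<Longrightarrow> 0 \<le> q t \<and> q t \<le> M"
  shows "0 \<le> integral {c..d} q" "integral {c..d} q \<le> M * (d - c)"
proof -
  have int: "q integrable_on {c..d}" by (rule integrable_continuous_interval[OF q])
  show "0 \<le> integral {c..d} q" using q_bounds by (intro integral_nonneg[OF int]) auto
  have "integral {c..d} q \<le> integral {c..d} (\<lambda>t. M)"
    using q_bounds by (intro integral_le[OF int]) auto
  then show "integral {c..d} q \<le> M * (d - c)" using \<open>c \<le> d\<close> by (simp add: mult.commute)
qed

lemma integral_weighted_nonneg:
  fixes q :: "real \<Rightarrow> real"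
  assumes q: "continuous_on {c..d} q" and q_nonneg: "\<And>t. t \<in> {c..d} \<Longrightarrow> 0 \<le> q t"
  shows "0 \<le> integral {c..d} (\<lambda>t. (d - t) * q t)" "0 \<le> integral {c..d} (\<lambda>t. (t - c) * q t)"
  using q_nonneg
  by (intro integral_nonneg integrable_continuous_interval continuous_intros q; simp)+

lemma endpoint_moments_ge_if_max_at_right:
  fixes q :: "real \<Rightarrow> real"
  assumes "c \<le> d" and q: "continuous_on {c..d} q"
    and q_bounds: "\<And>t. t \<in> {c..d} \<Longrightarrow> 0 \<le> q t \<and> q t \<le> q d"
  shows "(integral {c..d} q)^2 / 2 \<le> endpoint_moments c d q"
proof -
  define Q where "Q = integral {c..d} q"
  have Q: "0 \<le> Q" "Q \<le> q d * (d - c)"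
    using integral_bounds[OF \<open>c \<le> d\<close> q q_bounds] unfolding Q_def by auto
  have "0 \<le> q c * integral {c..d} (\<lambda>t. (t - c) * q t)"
    using integral_weighted_nonneg[OF q] q_bounds \<open>c \<le> d\<close> by simp
  moreover have "Q^2 / 2 \<le> q d * integral {c..d} (\<lambda>t. (d - t) * q t)"
  proof (cases "q d = 0")
    case True
    then show ?thesis
      using Q integral_weighted_nonneg[OF q] q_bounds by simp
  next
    case False
    moreover have "0 \<le> q d" using q_bounds[of d] \<open>c \<le> d\<close> by simp
    ultimately have qd: "0 < q d" by simp
    define \<mu> where "\<mu> = Q / q d"
    have "continuous_on {c..d} (\<lambda>t. d - t)" by (intro continuous_intros)
    from bathtub_lower_bound[OF q this q_bounds, of \<mu>]
    have "\<mu> * Q - q d * integral {c..d} (\<lambda>t. max 0 (\<mu> - (d - t)))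
        \<le> integral {c..d} (\<lambda>t. (d - t) * q t)"
      unfolding Q_def .
    moreover have "integral {c..d} (\<lambda>t. max 0 (\<mu> - (d - t))) = \<mu>^2 / 2"
      using Q qd by (intro integral_ramp_right) (auto simp: \<mu>_def field_simps)
    ultimately have "\<mu> * Q - q d * (\<mu>^2 / 2) \<le> integral {c..d} (\<lambda>t. (d - t) * q t)"
      by simp
    moreover have "\<mu> * Q - q d * (\<mu>^2 / 2) = Q^2 / (2 * q d)"
      using qd by (simp add: \<mu>_def field_simps power2_eq_square)
    ultimately have "Q^2 / (2 * q d) \<le> integral {c..d} (\<lambda>t. (d - t) * q t)"
      by linarith
    from mult_left_mono[OF this, of "q d"] show ?thesis
      using qd by simp
  qed
  ultimately show ?thesis
    unfolding endpoint_moments_def Q_def by linarith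
qed

lemma endpoint_moments_ge_if_max_at_left:
  fixes q :: "real \<Rightarrow> real"
  assumes "c \<le> d" and q: "continuous_on {c..d} q"
    and q_bounds: "\<And>t. t \<in> {c..d} \<Longrightarrow> 0 \<le> q t \<and> q t \<le> q c"
  shows "(integral {c..d} q)^2 / 2 \<le> endpoint_moments c d q"
proof -
  define Q where "Q = integral {c..d} q"
  have Q: "0 \<le> Q" "Q \<le> q c * (d - c)"
    using integral_bounds[OF \<open>c \<le> d\<close> q q_bounds] unfolding Q_def by auto
  have "0 \<le> q d * integral {c..d} (\<lambda>t. (d - t) * q t)"
    using integral_weighted_nonneg[OF q] q_bounds \<open>c \<le> d\<close> by simp
  moreover have "Q^2 / 2 \<le> q c * integral {c..d} (\<lambda>t. (t - c) * q t)"
  proof (cases "q c = 0")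
    case True
    then show ?thesis
      using Q integral_weighted_nonneg[OF q] q_bounds by simp
  next
    case False
    moreover have "0 \<le> q c" using q_bounds[of c] \<open>c \<le> d\<close> by simp
    ultimately have qc: "0 < q c" by simp
    define \<mu> where "\<mu> = Q / q c"
    have "continuous_on {c..d} (\<lambda>t. t - c)" by (intro continuous_intros)
    from bathtub_lower_bound[OF q this q_bounds, of \<mu>]
    have "\<mu> * Q - q c * integral {c..d} (\<lambda>t. max 0 (\<mu> - (t - c)))
        \<le> integral {c..d} (\<lambda>t. (t - c) * q t)"
      unfolding Q_def .
    moreover have "integral {c..d} (\<lambda>t. max 0 (\<mu> - (t - c))) = \<mu>^2 / 2"
      using Q qc by (intro integral_ramp_left) (auto simp: \<mu>_def field_simps)
    ultimately have "\<mu> * Q - q c * (\<mu>^2 / 2) \<le> integral {c..d} (\<lambda>t. (t - c) * q t)"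
      by simp
    moreover have "\<mu> * Q - q c * (\<mu>^2 / 2) = Q^2 / (2 * q c)"
      using qc by (simp add: \<mu>_def field_simps power2_eq_square)
    ultimately have "Q^2 / (2 * q c) \<le> integral {c..d} (\<lambda>t. (t - c) * q t)"
      by linarith
    from mult_left_mono[OF this, of "q c"] show ?thesis
      using qc by simp
  qed
  ultimately show ?thesis
    unfolding endpoint_moments_def Q_def by linarith
qed

text \<open>The weights \<open>d - t\<close> and \<open>t - c\<close> add up to \<open>d - c\<close>, and \<open>\<integral> q \<le> 2 min (q c) (q d) (d - c)\<close>.\<close>

lemma endpoint_moments_ge_if_doubling:
  fixes q :: "real \<Rightarrow> real"
  assumes "c \<le> d" and q: "continuous_on {c..d} q"
    and q_bounds: "\<And>t. t \<in> {c..d} \<Longrightarrow> 0 \<le> q t \<and> q t \<le> 2 * q c \<and> q t \<le> 2 * q d"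
  shows "(integral {c..d} q)^2 / 2 \<le> endpoint_moments c d q"
proof -
  define Q where "Q = integral {c..d} q"
  define Ar where "Ar = integral {c..d} (\<lambda>t. (d - t) * q t)"
  define Al where "Al = integral {c..d} (\<lambda>t. (t - c) * q t)"
  define m where "m = min (q c) (q d)"
  have weights: "0 \<le> Ar" "0 \<le> Al"
    using integral_weighted_nonneg[OF q] q_bounds unfolding Ar_def Al_def by auto
  have "Ar + Al = integral {c..d} (\<lambda>t. (d - t) * q t + (t - c) * q t)"
    unfolding Ar_def Al_def
    by (rule integral_add[symmetric]) (intro integrable_continuous_interval continuous_intros q)+
  also have "\<dots> = integral {c..d} (\<lambda>t. (d - c) * q t)"
    by (rule integral_cong) (simp add: algebra_simps)
  also have "\<dots> = (d - c) * Q"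
    by (simp add: Q_def)
  finally have sum: "Ar + Al = (d - c) * Q" .
  have "Q \<le> 2 * q c * (d - c)" "Q \<le> 2 * q d * (d - c)" "0 \<le> Q"
    using integral_bounds[OF \<open>c \<le> d\<close> q, of "2 * q c"] integral_bounds[OF \<open>c \<le> d\<close> q, of "2 * q d"]
      q_bounds unfolding Q_def by auto
  then have "Q * Q \<le> (2 * m * (d - c)) * Q"
    unfolding m_def by (intro mult_right_mono) (auto simp: min_def)
  also have "\<dots> = 2 * m * ((d - c) * Q)"
    by (simp only: mult.assoc)
  also have "\<dots> = 2 * (m * Ar) + 2 * (m * Al)"
    unfolding sum[symmetric] by (simp add: algebra_simps)
  also have "\<dots> \<le> 2 * (q d * Ar + q c * Al)"
    using mult_right_mono[OF _ weights(1), of m "q d"] mult_right_mono[OF _ weights(2), of m "q c"]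
    unfolding m_def by simp
  finally show ?thesis
    unfolding endpoint_moments_def Q_def Ar_def Al_def by (simp add: power2_eq_square)
qed

lemma endpoint_moments_lower_bound:
  fixes p :: "real \<Rightarrow> real"
  assumes "a \<le> c" "c \<le> d" "d \<le> b" "d - c \<le> r" "r < \<epsilon> - \<delta>"
    and p: "continuous_on {c..d} p" and p_nonneg: "\<And>t. 0 \<le> p t"
    and incr: "strict_mono_on {a..a+\<epsilon>} p"
    and decr: "\<forall>x \<in> {b-\<epsilon>..b}. \<forall>y \<in> {b-\<epsilon>..b}. x < y \<longrightarrow> p y < p x"
    and slow: "\<And>z t. z \<in> {a+\<delta>..b-\<delta>} \<Longrightarrow> t \<in> {a..b} \<Longrightarrow> \<bar>t - z\<bar> \<le> r \<Longrightarrow> \<bar>p t - p z\<bar> \<le> p z"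
  shows "(integral {c..d} p)^2 / 2 \<le> endpoint_moments c d p"
proof -
  consider "c < a + \<delta>" | "b - \<delta> < d" | "a + \<delta> \<le> c" "d \<le> b - \<delta>" by linarith
  then show ?thesis
  proof cases
    case 1
    have "p t \<le> p d" if "t \<in> {c..d}" for t
      using strict_mono_onD[OF incr, of t d] that assms 1 by (cases "t = d") auto
    then show ?thesis
      using p_nonneg by (intro endpoint_moments_ge_if_max_at_right[OF \<open>c \<le> d\<close> p]) auto
  next
    case 2
    have "p t \<le> p c" if "t \<in> {c..d}" for t
    proof (cases "t = c")
      case False
      have "c \<in> {b-\<epsilon>..b}" "t \<in> {b-\<epsilon>..b}" "c < t" using that assms 2 False by auto
      then show ?thesis using decr[rule_format, of c t] by simp
    qed simp
    then show ?thesis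
      using p_nonneg by (intro endpoint_moments_ge_if_max_at_left[OF \<open>c \<le> d\<close> p]) auto
  next
    case 3
    have "p t \<le> 2 * p c \<and> p t \<le> 2 * p d" if "t \<in> {c..d}" for t
    proof -
      have "\<bar>p t - p c\<bar> \<le> p c" by (rule slow) (use that assms 3 in auto)
      moreover have "\<bar>p t - p d\<bar> \<le> p d" by (rule slow) (use that assms 3 in auto)
      ultimately show ?thesis by (auto simp: abs_le_iff)
    qed
    then show ?thesis
      using p_nonneg by (intro endpoint_moments_ge_if_doubling[OF \<open>c \<le> d\<close> p]) auto
  qed
qed

section \<open>The Lipschitz constant\<close>

lemma Lip_ge_quotient:
  assumes "x \<in> {a..b}" "y \<in> {a..b}" "x \<noteq> y"
  shows "ereal (\<bar>F x - F y\<bar> / \<bar>x - y\<bar>) \<le> Lip a b F"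
  unfolding Lip_def by (rule SUP_upper2[where i = "(x, y)"]) (use assms in auto)

lemma Lip_nonneg: "a < b \<Longrightarrow> 0 \<le> Lip a b F"
  using Lip_ge_quotient[of a a b b F] by (auto intro: order_trans[rotated])

lemma Lipschitz_if_Lip_eq:
  assumes "Lip a b F = ereal L" "x \<in> {a..b}" "y \<in> {a..b}"
  shows "\<bar>F x - F y\<bar> \<le> L * \<bar>x - y\<bar>"
proof (cases "x = y")
  case False
  then have "\<bar>F x - F y\<bar> / \<bar>x - y\<bar> \<le> L" using Lip_ge_quotient[of x a b y F] assms by simp
  then show ?thesis using False by (simp add: divide_le_eq)
qed simp

lemma deviation_le_if_INF_ge_Lip:
  fixes p :: "real \<Rightarrow> real"
  assumes "0 \<le> r" and INF: "ereal r * Lip a b p \<le> (INF x \<in> S. ereal (p x))"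
    and z: "z \<in> S" "z \<in> {a..b}" "0 \<le> p z" and t: "t \<in> {a..b}" and "\<bar>t - z\<bar> \<le> r"
  shows "\<bar>p t - p z\<bar> \<le> p z"
proof (cases "t = z")
  case False
  define s where "s = \<bar>p t - p z\<bar> / \<bar>t - z\<bar>"
  have "ereal (r * s) \<le> ereal r * Lip a b p"
    unfolding s_def times_ereal.simps(1)[symmetric]
    using \<open>0 \<le> r\<close> by (intro ereal_mult_left_mono Lip_ge_quotient t z(2) False) auto
  also have "\<dots> \<le> ereal (p z)"
    using INF INF_lower[OF z(1), of "\<lambda>x. ereal (p x)"] by (rule order_trans)
  finally have "r * s \<le> p z" by simp
  moreover have "\<bar>p t - p z\<bar> = s * \<bar>t - z\<bar>"
    using False by (simp add: s_def)
  moreover have "s * \<bar>t - z\<bar> \<le> s * r"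
    using \<open>\<bar>t - z\<bar> \<le> r\<close> by (intro mult_left_mono) (auto simp: s_def)
  ultimately show ?thesis by (simp add: mult.commute)
qed (simp add: \<open>0 \<le> p z\<close>)

section \<open>Nested activation windows at a stable critical point\<close>

locale stable_critical_clip_net =
  fixes a b :: real and h :: nat and v w \<theta> :: "nat \<Rightarrow> real" and f p :: "real \<Rightarrow> real"
  assumes a_less_b: "a < b"
    and weights_pos: "\<forall>i \<in> {1..h}. v i > 0 \<and> w i > 0"
    and f_cont: "continuous_on UNIV f" and p_cont: "continuous_on UNIV p"
    and p_nonneg: "\<forall>x. p x \<ge> 0" and p_support: "{x. p x > 0} = {a<..<b}"
    and Lip_f_less: "Lip a b f < ereal (Min ((\<lambda>i. v i * w i) ` {1..h}))"
    and gradient_zero: "\<forall>i \<in> {1..h+1}. partial (risk a b h v w f p) i \<theta> = 0"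
    and not_descending: "\<not> descending_critical_point (h+1) (risk a b h v w f p) \<theta>"
begin

definition residual :: "real \<Rightarrow> real" where
  "residual x = NN h v w \<theta> x - f x"

text \<open>\<open>{lo k..hi k}\<close> is the closure of \<open>Iset a b w \<theta> k\<close>: the part of \<open>[a, b]\<close> on which
  neuron \<open>k\<close> is neither constantly \<open>0\<close> nor constantly \<open>1\<close>.\<close>

definition lo :: "nat \<Rightarrow> real" where
  "lo k = max (psi w \<theta> k) a"

definition hi :: "nat \<Rightarrow> real" where
  "hi k = min (psi w \<theta> k + 1 / w k) b"

definition Lf :: real where
  "Lf = real_of_ereal (Lip a b f)"

lemma v_pos: "i \<in> {1..h} \<Longrightarrow> 0 < v i" and w_pos: "i \<in> {1..h} \<Longrightarrow> 0 < w i"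
  using weights_pos by auto

lemma p_zero_outside: "x \<notin> {a<..<b} \<Longrightarrow> p x = 0"
  using p_nonneg p_support by (metis less_eq_real_def mem_Collect_eq)

lemma p_pos_inside: "x \<in> {a<..<b} \<Longrightarrow> 0 < p x"
  using p_support by blast

lemma residual_continuous: "continuous_on S residual"
  unfolding residual_def[abs_def] NN_def
  by (intro continuous_intros continuous_on_subset[OF f_cont]) simp

lemma Lip_f_eq: "Lip a b f = ereal Lf"
  using Lip_nonneg[OF a_less_b, of f] Lip_f_less unfolding Lf_def by (cases "Lip a b f") auto

lemma f_Lipschitz: "x \<in> {a..b} \<Longrightarrow> y \<in> {a..b} \<Longrightarrow> \<bar>f x - f y\<bar> \<le> Lf * \<bar>x - y\<bar>"
  by (rule Lipschitz_if_Lip_eq[OF Lip_f_eq])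

lemma Lf_less: "j \<in> {1..h} \<Longrightarrow> Lf < v j * w j"
  using Lip_f_less Min_le[of "(\<lambda>i. v i * w i) ` {1..h}" "v j * w j"] by (force simp: Lip_f_eq)

lemma Iset_eq: "Iset a b w \<theta> k = {lo k<..<hi k}"
  by (auto simp: Iset_def lo_def hi_def)

lemma window_length_le: "hi k - lo k \<le> 1 / w k"
  by (simp add: lo_def hi_def)

lemma risk_bias_derivatives_residual:
  assumes k: "k \<in> {1..h}"
  defines "l \<equiv> psi w \<theta> k" and "r \<equiv> psi w \<theta> k + 1 / w k"
  shows "partial (risk a b h v w f p) k \<theta> = 2 * v k * integral {l..r} (\<lambda>x. residual x * p x)"
    and "hess (risk a b h v w f p) \<theta> k k
           = 2 * v k / w k * (residual l * p l - residual r * p r) + 2 * (v k)^2 * integral {l..r} p"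
  using risk_bias_derivatives[where a = a and b = b and w = w and v = v and \<theta> = \<theta>,
      OF k w_pos[OF k] f_cont p_cont p_zero_outside less_imp_le[OF a_less_b]]
  unfolding residual_def l_def r_def by simp_all

lemma integral_window_eq_clipped:
  fixes G :: "real \<Rightarrow> real"
  assumes "continuous_on UNIV G" "lo k \<le> hi k"
  shows "integral {psi w \<theta> k..psi w \<theta> k + 1 / w k} (\<lambda>x. G x * p x) = integral {lo k..hi k} (\<lambda>x. G x * p x)"
  unfolding lo_def hi_def using assms p_zero_outside
  by (intro integral_restrict_support continuous_on_mult p_cont) (auto simp: lo_def hi_def)

lemma hess_bias_nonneg: "k \<in> {1..h} \<Longrightarrow> 0 \<le> hess (risk a b h v w f p) \<theta> k k"
  using not_descending gradient_zero descending_critical_point_if_hess_diag_neg[of "h+1"] by fastforce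

lemma residual_orthogonal:
  assumes k: "k \<in> {1..h}" and "lo k \<le> hi k"
  shows "integral {lo k..hi k} (\<lambda>x. residual x * p x) = 0"
  using risk_bias_derivatives_residual(1)[OF k] gradient_zero k v_pos[OF k]
    integral_window_eq_clipped[OF residual_continuous \<open>lo k \<le> hi k\<close>]
  by simp

text \<open>Outside \<open>(a, b)\<close> the density vanishes, so the boundary terms of the second derivative
  may be evaluated at the clipped endpoints.\<close>

lemma residual_flux_le:
  assumes k: "k \<in> {1..h}" and "lo k \<le> hi k"
  shows "residual (hi k) * p (hi k) - residual (lo k) * p (lo k) \<le> v k * w k * integral {lo k..hi k} p"
proof -
  define l r where "l = psi w \<theta> k" and "r = psi w \<theta> k + 1 / w k"
  have "0 \<le> 2 * v k / w k * (residual l * p l - residual r * p r) + 2 * (v k)^2 * integral {l..r} p"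
    using hess_bias_nonneg[OF k] risk_bias_derivatives_residual(2)[OF k] unfolding l_def r_def by simp
  also have "2 * v k / w k * (residual l * p l - residual r * p r) + 2 * (v k)^2 * integral {l..r} p
      = 2 * v k / w k * (residual l * p l - residual r * p r + v k * w k * integral {l..r} p)"
    using w_pos[OF k] by (simp add: field_simps power2_eq_square)
  finally have "0 \<le> residual l * p l - residual r * p r + v k * w k * integral {l..r} p"
    using v_pos[OF k] w_pos[OF k] by (simp add: zero_le_divide_iff zero_le_mult_iff)
  then have "residual r * p r - residual l * p l \<le> v k * w k * integral {l..r} p"
    by linarith
  moreover have "integral {l..r} p = integral {lo k..hi k} p"
    using integral_window_eq_clipped[of "\<lambda>_. 1" k] \<open>lo k \<le> hi k\<close> unfolding l_def r_def by simp
  moreover have "residual r * p r = residual (hi k) * p (hi k)"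
    using p_zero_outside[of r] p_zero_outside[of b] a_less_b
    by (cases "r \<le> b") (auto simp: hi_def r_def min_def)
  moreover have "residual l * p l = residual (lo k) * p (lo k)"
    using p_zero_outside[of l] p_zero_outside[of a] a_less_b
    by (cases "a \<le> l") (auto simp: lo_def l_def max_def)
  ultimately show ?thesis by simp
qed

text \<open>Each neuron of \<open>T\<close> is linear on \<open>[x, y]\<close> with slope \<open>v j * w j\<close>, all other neurons are
  nondecreasing, and \<open>f\<close> can decrease the slope by at most \<open>Lf\<close>.\<close>

lemma residual_slope:
  assumes T: "T \<subseteq> {1..h}" and "a \<le> x" "x \<le> y" "y \<le> b"
    and window: "\<And>j. j \<in> T \<Longrightarrow> lo j \<le> x \<and> y \<le> hi j"
  shows "((\<Sum>j \<in> T. v j * w j) - Lf) * (y - x) \<le> residual y - residual x"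
proof -
  have linear: "clip (w j * z + \<theta> j) = w j * z + \<theta> j" if "j \<in> T" "z \<in> {x..y}" for j z
  proof -
    have wj: "0 < w j" using w_pos that T by auto
    have "psi w \<theta> j \<le> z" "z \<le> psi w \<theta> j + 1 / w j"
      using window[OF that(1)] that(2) by (auto simp: lo_def hi_def)
    then have "0 \<le> w j * z + \<theta> j" "w j * z + \<theta> j \<le> 1"
      using wj by (simp_all add: psi_def field_simps)
    then show ?thesis by (rule clip_eq_self)
  qed
  have "(\<Sum>j \<in> T. v j * w j) * (y - x) = (\<Sum>j \<in> T. v j * w j * (y - x))"
    by (simp add: sum_distrib_right)
  also have "\<dots> = (\<Sum>j \<in> T. v j * (clip (w j * y + \<theta> j) - clip (w j * x + \<theta> j)))"
  proof (rule sum.cong)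
    fix j assume "j \<in> T"
    then have "clip (w j * y + \<theta> j) = w j * y + \<theta> j" "clip (w j * x + \<theta> j) = w j * x + \<theta> j"
      using linear \<open>x \<le> y\<close> by auto
    then show "v j * w j * (y - x) = v j * (clip (w j * y + \<theta> j) - clip (w j * x + \<theta> j))"
      by (simp add: algebra_simps)
  qed simp
  also have "\<dots> \<le> (\<Sum>j = 1..h. v j * (clip (w j * y + \<theta> j) - clip (w j * x + \<theta> j)))"
  proof (rule sum_mono2)
    fix j assume "j \<in> {1..h} - T"
    then have "0 < v j" "0 < w j" using v_pos w_pos by auto
    then show "0 \<le> v j * (clip (w j * y + \<theta> j) - clip (w j * x + \<theta> j))"
      using clip_mono[of "w j * x + \<theta> j" "w j * y + \<theta> j"] \<open>x \<le> y\<close> by (simp add: mult_left_mono)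
  qed (use T in auto)
  also have "\<dots> = NN h v w \<theta> y - NN h v w \<theta> x"
    by (simp add: NN_def sum_subtractf algebra_simps)
  finally show ?thesis
    using f_Lipschitz[of y x] assms by (simp add: residual_def algebra_simps)
qed

lemma integral_residual_sign:
  assumes "a \<le> c" "c < d" "d \<le> b" "0 < \<sigma>"
    and slope: "\<And>x y. c \<le> x \<Longrightarrow> x \<le> y \<Longrightarrow> y \<le> d \<Longrightarrow> \<sigma> * (y - x) \<le> residual y - residual x"
  shows "0 \<le> residual c \<Longrightarrow> 0 < integral {c..d} (\<lambda>t. residual t * p t)"
    and "residual d \<le> 0 \<Longrightarrow> integral {c..d} (\<lambda>t. residual t * p t) < 0"
proof -
  have cont: "continuous_on {c..d} (\<lambda>t. residual t * p t)"
    by (intro continuous_intros residual_continuous continuous_on_subset[OF p_cont]) auto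
  have p_pos: "0 < p t" if "t \<in> {c<..<d}" for t
    using that assms by (intro p_pos_inside) auto
  have "integral {c..d} (\<lambda>_. 0) < integral {c..d} (\<lambda>t. residual t * p t)" if "0 \<le> residual c"
  proof (rule integral_less_real[OF _ cont])
    fix t assume t: "t \<in> {c<..<d}"
    have "0 < \<sigma> * (t - c)" using t \<open>0 < \<sigma>\<close> by simp
    also have "\<dots> \<le> residual t" using slope[of c t] t that by auto
    finally show "0 < residual t * p t" using p_pos[OF t] by simp
  qed (use \<open>c < d\<close> in auto)
  then show "0 \<le> residual c \<Longrightarrow> 0 < integral {c..d} (\<lambda>t. residual t * p t)" by simp
  have "integral {c..d} (\<lambda>t. residual t * p t) < integral {c..d} (\<lambda>_. 0)" if "residual d \<le> 0"
  proof (rule integral_less_real[OF cont])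
    fix t assume t: "t \<in> {c<..<d}"
    have "residual t \<le> residual d - \<sigma> * (d - t)" using slope[of t d] t by auto
    also have "\<dots> < 0"
    proof -
      have "0 < \<sigma> * (d - t)" using t \<open>0 < \<sigma>\<close> by simp
      then show ?thesis using that by linarith
    qed
    finally show "residual t * p t < 0" using p_pos[OF t] by (simp add: mult_neg_pos)
  qed (use \<open>c < d\<close> in auto)
  then show "residual d \<le> 0 \<Longrightarrow> integral {c..d} (\<lambda>t. residual t * p t) < 0" by simp
qed

text \<open>Both windows carry a residual orthogonal to \<open>p\<close> and increasing with positive slope.
  If they crossed, the signs of the residual at \<open>lo j\<close> and \<open>hi i\<close> would force the integral of
  \<open>residual * p\<close> over one of the pieces \<open>[lo i, lo j]\<close>, \<open>[lo j, hi i]\<close>, \<open>[hi i, hi j]\<close> to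
  have two different signs.\<close>

lemma active_windows_not_crossing:
  assumes i: "i \<in> {1..h}" and j: "j \<in> {1..h}"
    and x: "x \<in> Iset a b w \<theta> i" "x \<in> Iset a b w \<theta> j"
  shows "\<not> (lo i < lo j \<and> hi i < hi j)"
proof
  assume cross: "lo i < lo j \<and> hi i < hi j"
  have order: "a \<le> lo i" "lo i < lo j" "lo j < hi i" "hi i < hi j" "hi j \<le> b"
    using cross x unfolding Iset_eq by (auto simp: lo_def hi_def)
  have slope: "((v k * w k) - Lf) * (y - x) \<le> residual y - residual x"
    if "k \<in> {1..h}" "lo k \<le> x" "x \<le> y" "y \<le> hi k" for k x y
    using residual_slope[of "{k}" x y] that by (auto simp: lo_def hi_def)
  note sign_i = integral_residual_sign[of _ _ "v i * w i - Lf", OF _ _ _ _ slope[OF i]]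
  note sign_j = integral_residual_sign[of _ _ "v j * w j - Lf", OF _ _ _ _ slope[OF j]]
  have pos: "0 < v i * w i - Lf" "0 < v j * w j - Lf" using Lf_less i j by auto
  have orth: "integral {lo i..hi i} (\<lambda>t. residual t * p t) = 0"
    "integral {lo j..hi j} (\<lambda>t. residual t * p t) = 0"
    using residual_orthogonal i j order by auto
  have split: "integral {lo i..hi i} (\<lambda>t. residual t * p t)
      = integral {lo i..lo j} (\<lambda>t. residual t * p t) + integral {lo j..hi i} (\<lambda>t. residual t * p t)"
    "integral {lo j..hi j} (\<lambda>t. residual t * p t)
      = integral {lo j..hi i} (\<lambda>t. residual t * p t) + integral {hi i..hi j} (\<lambda>t. residual t * p t)"
    using order by (simp_all add: Henstock_Kurzweil_Integration.integral_combine
        continuous_on_UNIV_integrable continuous_on_mult residual_continuous p_cont)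
  show False
  proof (cases "0 \<le> residual (lo j)")
    case True
    then show ?thesis
      using sign_j(1)[of "lo j" "hi j"] orth order pos by auto
  next
    case False
    then have left: "integral {lo i..lo j} (\<lambda>t. residual t * p t) < 0"
      using sign_i(2)[of "lo i" "lo j"] order pos by auto
    show ?thesis
    proof (cases "residual (hi i) \<le> 0")
      case True
      then show ?thesis
        using sign_i(2)[of "lo i" "hi i"] orth order pos by auto
    next
      case False
      then have "0 < integral {hi i..hi j} (\<lambda>t. residual t * p t)"
        using sign_j(1)[of "hi i" "hi j"] order pos by auto
      then show ?thesis
        using left orth split by linarith
    qed
  qed
qed

lemma innermost_active_window:
  assumes "j \<in> {1..h}" "x \<in> Iset a b w \<theta> j"
  obtains k where "k \<in> {1..h}" "x \<in> Iset a b w \<theta> k"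
    "\<And>j. j \<in> {1..h} \<Longrightarrow> x \<in> Iset a b w \<theta> j \<Longrightarrow> lo j \<le> lo k \<and> hi k \<le> hi j"
proof -
  define J where "J = {j \<in> {1..h}. x \<in> Iset a b w \<theta> j}"
  define len where "len j = hi j - lo j" for j
  have "finite J" "J \<noteq> {}" using assms unfolding J_def by auto
  then have "Min (len ` J) \<in> len ` J" by (intro Min_in) auto
  then obtain k where k: "k \<in> J" "len k = Min (len ` J)" by auto
  have "lo j \<le> lo k \<and> hi k \<le> hi j" if j: "j \<in> J" for j
  proof -
    have "\<not> (lo k < lo j \<and> hi k < hi j)" "\<not> (lo j < lo k \<and> hi j < hi k)"
      using active_windows_not_crossing[of k j x] active_windows_not_crossing[of j k x] k(1) j
      unfolding J_def by auto
    moreover have "len k \<le> len j" using k \<open>finite J\<close> j by simp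
    ultimately show ?thesis unfolding len_def by auto
  qed
  then show ?thesis
    using that k(1) unfolding J_def by blast
qed

lemma active_weight_sum_le_innermost:
  assumes moments: "\<And>c d. a \<le> c \<Longrightarrow> c < d \<Longrightarrow> d \<le> b \<Longrightarrow> d - c \<le> 1 / Min (w ` {1..h}) \<Longrightarrow>
      (integral {c..d} p)^2 / 2 \<le> endpoint_moments c d p"
    and k: "k \<in> {1..h}" "x \<in> Iset a b w \<theta> k"
    and innermost: "\<And>j. j \<in> {1..h} \<Longrightarrow> x \<in> Iset a b w \<theta> j \<Longrightarrow> lo j \<le> lo k \<and> hi k \<le> hi j"
  shows "(\<Sum>j \<in> {j \<in> {1..h}. x \<in> Iset a b w \<theta> j}. v j * w j) - Lf \<le> 2 * (v k * w k)"
proof -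
  define J where "J = {j \<in> {1..h}. x \<in> Iset a b w \<theta> j}"
  define S where "S = (\<Sum>j \<in> J. v j * w j)"
  have "lo k < x" "x < hi k" using k(2) unfolding Iset_eq by simp_all
  moreover have "a \<le> lo k" "hi k \<le> b" by (simp_all add: lo_def hi_def)
  ultimately have window: "a \<le> lo k" "lo k < hi k" "hi k \<le> b" by simp_all
  have "0 \<le> v j * w j" if "j \<in> J" for j
    using that v_pos w_pos unfolding J_def by (simp add: less_imp_le)
  then have "v k * w k \<le> S"
    unfolding S_def using k by (intro member_le_sum) (auto simp: J_def)
  have "S - Lf \<le> 2 * (v k * w k)"
  proof (rule slope_le_twice_flux_bound[where g = residual and q = p])
    show "lo k \<le> hi k" "continuous_on {lo k..hi k} residual" "continuous_on {lo k..hi k} p"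
      using window by (auto intro: residual_continuous continuous_on_subset[OF p_cont])
    show "0 \<le> p t" for t using p_nonneg by simp
    show "integral {lo k..hi k} (\<lambda>t. residual t * p t) = 0"
      using k(1) window by (intro residual_orthogonal) auto
    show "residual (hi k) * p (hi k) - residual (lo k) * p (lo k) \<le> v k * w k * integral {lo k..hi k} p"
      using k(1) window by (intro residual_flux_le) auto
    show "(S - Lf) * (t - s) \<le> residual t - residual s" if st: "lo k \<le> s" "s \<le> t" "t \<le> hi k" for s t
    proof -
      have "lo j \<le> s \<and> t \<le> hi j" if "j \<in> J" for j
        using innermost[of j] that st unfolding J_def by force
      then show ?thesis
        unfolding S_def by (rule residual_slope[rotated 4]) (use window st in \<open>auto simp: J_def\<close>)
    qed
    show "0 \<le> S - Lf"
      using \<open>v k * w k \<le> S\<close> Lf_less[OF k(1)] by simp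
    show "0 < integral {lo k..hi k} p"
      using integral_less_real[of "lo k" "hi k" "\<lambda>_. 0" p] window p_pos_inside
      by (auto intro: continuous_on_subset[OF p_cont])
    have "Min (w ` {1..h}) \<le> w k" using k(1) by (intro Min_le) auto
    moreover have "0 < Min (w ` {1..h})" using k(1) w_pos by (subst Min_gr_iff) auto
    ultimately have "1 / w k \<le> 1 / Min (w ` {1..h})" by (intro divide_left_mono) auto
    then show "(integral {lo k..hi k} p)^2 / 2 \<le> endpoint_moments (lo k) (hi k) p"
      using window window_length_le[of k] by (intro moments) auto
  qed
  then show ?thesis unfolding S_def J_def .
qed

lemma active_weight_sum_le:
  assumes moments: "\<And>c d. a \<le> c \<Longrightarrow> c < d \<Longrightarrow> d \<le> b \<Longrightarrow> d - c \<le> 1 / Min (w ` {1..h}) \<Longrightarrow>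
      (integral {c..d} p)^2 / 2 \<le> endpoint_moments c d p"
  shows "(\<Sum>j \<in> {j \<in> {1..h}. x \<in> Iset a b w \<theta> j}. v j * w j)
           \<le> 4 * Max (insert 0 ((\<lambda>j. v j * w j) ` {j \<in> {1..h}. x \<in> Iset a b w \<theta> j}))"
proof (cases "\<exists>j \<in> {1..h}. x \<in> Iset a b w \<theta> j")
  case True
  then obtain k where k: "k \<in> {1..h}" "x \<in> Iset a b w \<theta> k"
    and innermost: "\<And>j. j \<in> {1..h} \<Longrightarrow> x \<in> Iset a b w \<theta> j \<Longrightarrow> lo j \<le> lo k \<and> hi k \<le> hi j"
    using innermost_active_window by blast
  have "v k * w k \<le> Max (insert 0 ((\<lambda>j. v j * w j) ` {j \<in> {1..h}. x \<in> Iset a b w \<theta> j}))"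
    using k by (intro Max_ge) auto
  moreover have "0 < v k * w k" using k v_pos w_pos by simp
  ultimately show ?thesis
    using active_weight_sum_le_innermost[OF moments k innermost] Lf_less[OF k(1)] by linarith
next
  case False
  then have "{j \<in> {1..h}. x \<in> Iset a b w \<theta> j} = {}" by auto
  then show ?thesis by (simp only:) simp
qed

end

theorem corollary2p11:
  fixes a b \<epsilon> \<delta> :: real and h :: nat and v w \<theta> :: "nat \<Rightarrow> real" and f p :: "real \<Rightarrow> real"
  assumes "a < b" and "h \<ge> 1"
    and "\<forall>i \<in> {1..h}. v i > 0 \<and> w i > 0"
    and "continuous_on UNIV f" and "continuous_on UNIV p"
    and "\<forall>x. p x \<ge> 0" and "{x. p x > 0} = {a<..<b}"
    and "Lip a b f < ereal (Min ((\<lambda>i. v i * w i) ` {1..h}))"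
    and "\<forall>i \<in> {1..h+1}. partial (risk a b h v w f p) i \<theta> = 0"
    and "\<epsilon> > 0" and "\<delta> > 0"
    and "\<epsilon> - \<delta> > 2 / Min (w ` {1..h})"
    and "(INF x \<in> {a+\<delta>..b-\<delta>}. ereal (p x)) \<ge> ereal (1 / Min (w ` {1..h})) * Lip a b p"
    and "strict_mono_on {a..a+\<epsilon>} p"
    and "\<forall>x \<in> {b-\<epsilon>..b}. \<forall>y \<in> {b-\<epsilon>..b}. x < y \<longrightarrow> p y < p x"
    and "\<not> descending_critical_point (h+1) (risk a b h v w f p) \<theta>"
  shows "\<forall>x \<in> {a<..<b}.
           (\<Sum>j \<in> {j \<in> {1..h}. x \<in> Iset a b w \<theta> j}. v j * w j)
             \<le> 4 * Max (insert 0 ((\<lambda>j. v j * w j) ` {j \<in> {1..h}. x \<in> Iset a b w \<theta> j}))"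
proof -
  interpret stable_critical_clip_net a b h v w \<theta> f p
    using assms by unfold_locales auto
  define m where "m = Min (w ` {1..h})"
  have "0 < m"
    unfolding m_def using assms(2,3) by (subst Min_gr_iff) auto
  have moments: "(integral {c..d} p)^2 / 2 \<le> endpoint_moments c d p"
    if "a \<le> c" "c < d" "d \<le> b" "d - c \<le> 1 / m" for c d
  proof (rule endpoint_moments_lower_bound[where a = a and b = b and \<epsilon> = \<epsilon> and \<delta> = \<delta>])
    have "1 / m < 2 / m" using \<open>0 < m\<close> by (intro divide_strict_right_mono) auto
    then show "1 / m < \<epsilon> - \<delta>" using assms(12) unfolding m_def[symmetric] by linarith
    show "\<bar>p t - p z\<bar> \<le> p z" if "z \<in> {a+\<delta>..b-\<delta>}" "t \<in> {a..b}" "\<bar>t - z\<bar> \<le> 1 / m" for z t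
      using that assms(6,11) \<open>0 < m\<close>
      by (intro deviation_le_if_INF_ge_Lip[OF _ assms(13)[folded m_def]]) auto
  qed (use that assms(5,6,14,15) in \<open>auto intro: continuous_on_subset\<close>)
  show ?thesis
    using active_weight_sum_le[OF moments[unfolded m_def]] by blast
qed

end
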